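(* Let $p$ be an odd prime, $\xi = e^{2\pi i/p^2}$, and $C$ the $p\times p$ cycle matrix. Let $\mathcal{T}$ be the set of all $2p\times 2p$ block-diagonal matrices of the form \[A = \operatorname{diag}\!\left(DC^k,\ 1,\ \xi^{k+a_1p},\ \xi^{2k+a_2p},\ \dots,\ \xi^{(p-1)k+a_{p-1}p}\right),\] where $D$ ranges over all $p\times p$ unitary diagonal matrices with $\det D=1$, $k\in\{0,1,\dots,p-1\}$, and $a_j\in\{0,1,\dots,p-1\}$ for $j=1,\dots,p-1$. Then $\mathcal{T}$ (a group of unitary $2p\times 2p$ matrices) is $\frac{1}{2p^2}$-argument-submultiplicative.
   Context: The $p\times p$ cycle matrix $C$ has entries $C_{j,j+1}=1$ for $j=1,\dots,p-1$, $C_{p,1}=1$, and all other entries $0$. For a complex number $z\neq 0$, $\arg(z)\in(-\pi,\pi]$ denotes its principal argument; $\sigma(M)$ denotes the spectrum of a matrix $M$. A group $\mathcal{G}$ of unitary $n\times n$ matrices is called $\varepsilon'$-argument-submultiplicative ($\varepsilon'$-ASM) if for every $A,B\in\mathcal{G}$ and every $\gamma\in\sigma(AB)$ there exist $\alpha\in\sigma(A)$ and $\beta\in\sigma(B)$ such that $\frac{1}{2\pi}\left|\arg\left(\frac{\alpha\beta}{\gamma}\right)\right|\le \varepsilon'$. *)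

theory Defs
  imports "HOL-Analysis.Analysis" "Jordan_Normal_Form.Schur_Decomposition"
begin

definition cycle_mat :: "nat \<Rightarrow> complex mat" where
  "cycle_mat p = mat p p (\<lambda>(i,j). if j = (i + 1) mod p then 1 else 0)"

definition diag_of :: "nat \<Rightarrow> (nat \<Rightarrow> complex) \<Rightarrow> complex mat" where
  "diag_of n d = mat n n (\<lambda>(i,j). if i = j then d i else 0)"

definition spectrum_mat :: "complex mat \<Rightarrow> complex set" where
  "spectrum_mat M = {x. eigenvalue M x}"

definition unitary_mat :: "nat \<Rightarrow> complex mat \<Rightarrow> bool" where
  "unitary_mat n U \<longleftrightarrow> U \<in> carrier_mat n n \<and> mat_adjoint U * U = 1\<^sub>m n"

definition is_mat_group :: "nat \<Rightarrow> complex mat set \<Rightarrow> bool" where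
  "is_mat_group n G \<longleftrightarrow> G \<subseteq> carrier_mat n n \<and> 1\<^sub>m n \<in> G \<and>
     (\<forall>A\<in>G. \<forall>B\<in>G. A * B \<in> G) \<and> (\<forall>A\<in>G. \<exists>B\<in>G. A * B = 1\<^sub>m n \<and> B * A = 1\<^sub>m n)"

definition eps_ASM :: "real \<Rightarrow> complex mat set \<Rightarrow> bool" where
  "eps_ASM eps G \<longleftrightarrow> (\<forall>A\<in>G. \<forall>B\<in>G. \<forall>\<gamma>\<in>spectrum_mat (A * B).
      \<exists>\<alpha>\<in>spectrum_mat A. \<exists>\<beta>\<in>spectrum_mat B. \<bar>Arg (\<alpha> * \<beta> / \<gamma>)\<bar> / (2 * pi) \<le> eps)"

definition T_elem :: "nat \<Rightarrow> (nat \<Rightarrow> complex) \<Rightarrow> nat \<Rightarrow> (nat \<Rightarrow> nat) \<Rightarrow> complex mat" where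
  "T_elem p d k a = (let \<xi> = exp (2 * pi * \<i> / of_nat (p^2)) in
     four_block_mat (diag_of p d * cycle_mat p ^\<^sub>m k) (0\<^sub>m p p) (0\<^sub>m p p)
       (diag_of p (\<lambda>j. if j = 0 then 1 else \<xi> ^ (j * k + a j * p))))"

definition T_set :: "nat \<Rightarrow> complex mat set" where
  "T_set p = {T_elem p d k a | d k a.
      (\<forall>i<p. cmod (d i) = 1) \<and> det (diag_of p d) = 1 \<and> k < p \<and> (\<forall>j\<in>{1..p-1}. a j < p)}"

end

theory Submission
  imports Defs "HOL-Number_Theory.Cong"
begin

text \<open>Every element of \<open>T_set p\<close> is a monomial matrix: it permutes the coordinates by the
  rotation \<open>i \<mapsto> i + k (mod p)\<close> of the first block, fixes the second block, and rescales.
  Its spectrum is therefore explicit: the entries \<open>1, \<xi>^(j k + a\<^sub>j p)\<close> of the second block,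
  together with the entries of \<open>D\<close> if \<open>k = 0\<close>, and all \<open>p\<close>-th roots of unity if \<open>k \<noteq> 0\<close>
  (the rotation is then a single \<open>p\<close>-cycle, along which the coefficients multiply to \<open>det D = 1\<close>).
  The set is closed under products, and the second-block entries of \<open>A B\<close> are the products of
  those of \<open>A\<close> and \<open>B\<close>. Hence an eigenvalue \<open>\<gamma>\<close> of \<open>A B\<close> is an exact product \<open>\<alpha> \<beta>\<close> of
  eigenvalues (a \<open>p\<close>-th root of unity is supplied by a rotating factor, the other contributing
  the eigenvalue 1), unless both factors rotate and \<open>\<gamma>\<close> is an entry of a product of diagonal
  unitaries. Then \<open>\<bar>\<gamma>\<bar> = 1\<close>, so \<open>\<gamma>\<close> lies within angle \<open>\<pi>/p\<^sup>2\<close> of some \<open>\<xi>^m\<close>, and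
  \<open>\<xi>^m = \<alpha> \<beta>\<close> with \<open>\<alpha> = \<xi>^(j k + a\<^sub>j p)\<close> chosen so that \<open>j k \<equiv> m (mod p)\<close>, making
  \<open>\<beta> = \<xi>^m / \<alpha>\<close> a \<open>p\<close>-th root of unity.\<close>

no_notation Finite_Cartesian_Product.vec_nth (infixl "$" 90)

definition monomial_mat :: "nat \<Rightarrow> (nat \<Rightarrow> 'a::zero) \<Rightarrow> (nat \<Rightarrow> nat) \<Rightarrow> 'a mat" where
  "monomial_mat n c \<pi> = mat n n (\<lambda>(i, j). if j = \<pi> i then c i else 0)"

lemma monomial_mat_carrier [simp]:
  "monomial_mat n c \<pi> \<in> carrier_mat n n"
  "dim_row (monomial_mat n c \<pi>) = n" "dim_col (monomial_mat n c \<pi>) = n"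
  by (auto simp: monomial_mat_def)

lemma index_monomial_mat [simp]:
  "i < n \<Longrightarrow> j < n \<Longrightarrow> monomial_mat n c \<pi> $$ (i, j) = (if j = \<pi> i then c i else 0)"
  by (simp add: monomial_mat_def)

lemma monomial_mat_cong:
  "(\<And>i. i < n \<Longrightarrow> c i = c' i) \<Longrightarrow> (\<And>i. i < n \<Longrightarrow> \<pi> i = \<pi>' i) \<Longrightarrow>
   monomial_mat n c \<pi> = monomial_mat n c' \<pi>'"
  by (rule eq_matI) auto

lemma one_mat_eq_monomial_mat: "1\<^sub>m n = monomial_mat n (\<lambda>_. 1) id"
  by (rule eq_matI) auto

lemma monomial_mat_mult_vec_index:
  fixes c :: "nat \<Rightarrow> 'a::semiring_0"
  assumes "\<pi> i < n" "i < n" "v \<in> carrier_vec n"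
  shows "(monomial_mat n c \<pi> *\<^sub>v v) $ i = c i * v $ \<pi> i"
proof -
  have "(monomial_mat n c \<pi> *\<^sub>v v) $ i = (\<Sum>l<n. if l = \<pi> i then c i * v $ l else 0)"
    using assms by (simp add: scalar_prod_def lessThan_atLeast0 if_distrib[of "\<lambda>x. x * _"] cong: if_cong)
  then show ?thesis
    using assms(1) by (simp add: sum.delta')
qed

lemma monomial_mat_mult:
  fixes c c' :: "nat \<Rightarrow> 'a::semiring_0"
  assumes "\<forall>i<n. \<pi> i < n"
  shows "monomial_mat n c \<pi> * monomial_mat n c' \<pi>' =
    monomial_mat n (\<lambda>i. c i * c' (\<pi> i)) (\<lambda>i. \<pi>' (\<pi> i))"
proof (rule eq_matI)
  fix i j assume "i < dim_row (monomial_mat n (\<lambda>i. c i * c' (\<pi> i)) (\<lambda>i. \<pi>' (\<pi> i)))"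
    and "j < dim_col (monomial_mat n (\<lambda>i. c i * c' (\<pi> i)) (\<lambda>i. \<pi>' (\<pi> i)))"
  then have i: "i < n" and j: "j < n" by auto
  let ?M = "monomial_mat n c \<pi>" and ?M' = "monomial_mat n c' \<pi>'"
  have "(?M * ?M') $$ (i, j) = (\<Sum>l<n. ?M $$ (i, l) * ?M' $$ (l, j))"
    using i j by (simp add: scalar_prod_def lessThan_atLeast0 del: index_monomial_mat)
  also have "\<dots> = (\<Sum>l<n. if l = \<pi> i then c i * ?M' $$ (l, j) else 0)"
    using i by (intro sum.cong) auto
  also have "\<dots> = monomial_mat n (\<lambda>i. c i * c' (\<pi> i)) (\<lambda>i. \<pi>' (\<pi> i)) $$ (i, j)"
    using assms i j by (simp add: sum.delta')
  finally show "(monomial_mat n c \<pi> * monomial_mat n c' \<pi>') $$ (i, j) =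
      monomial_mat n (\<lambda>i. c i * c' (\<pi> i)) (\<lambda>i. \<pi>' (\<pi> i)) $$ (i, j)" .
qed auto

lemma unitary_monomial_mat:
  assumes "\<forall>i<n. \<pi> i < n" "inj_on \<pi> {..<n}" "\<forall>i<n. cmod (c i) = 1"
  shows "unitary_mat n (monomial_mat n c \<pi>)"
  unfolding unitary_mat_def
proof
  let ?M = "monomial_mat n c \<pi>"
  have adj: "mat_adjoint ?M \<in> carrier_mat n n"
    "\<And>i j. i < n \<Longrightarrow> j < n \<Longrightarrow> mat_adjoint ?M $$ (i, j) = cnj (?M $$ (j, i))"
    by (auto simp: mat_adjoint_def mat_of_rows_index)
  show "mat_adjoint ?M * ?M = 1\<^sub>m n"
  proof (rule eq_matI)
    fix i j assume "i < dim_row (1\<^sub>m n :: complex mat)" "j < dim_col (1\<^sub>m n :: complex mat)"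
    then have i: "i < n" and j: "j < n" by auto
    have "\<pi> ` {..<n} = {..<n}"
      using assms(1,2) by (intro endo_inj_surj) auto
    then obtain l0 where l0: "l0 < n" "\<pi> l0 = i"
      using i by (metis imageE lessThan_iff)
    have preimage: "\<pi> l = i \<longleftrightarrow> l = l0" if "l < n" for l
      using assms(2) l0 that by (metis inj_onD lessThan_iff)
    have "(mat_adjoint ?M * ?M) $$ (i, j) = (\<Sum>l<n. cnj (?M $$ (l, i)) * ?M $$ (l, j))"
      using i j adj by (simp add: scalar_prod_def lessThan_atLeast0)
    also have "\<dots> = (\<Sum>l<n. if l = l0 then (if j = i then 1 else 0) else 0)"
    proof (rule sum.cong)
      fix l assume "l \<in> {..<n}"
      then have l: "l < n" by simp
      have "cnj (c l) * c l = 1"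
        using assms(3) l complex_norm_square[of "c l"] by (simp add: mult.commute)
      then show "cnj (?M $$ (l, i)) * ?M $$ (l, j) = (if l = l0 then (if j = i then 1 else 0) else 0)"
        using preimage[OF l] i j l l0 by auto
    qed simp
    also have "\<dots> = 1\<^sub>m n $$ (i, j)"
      using l0 i j by simp
    finally show "(mat_adjoint ?M * ?M) $$ (i, j) = 1\<^sub>m n $$ (i, j)" .
  qed (use adj in auto)
qed simp

lemma nonzero_vec_index:
  assumes "v \<in> carrier_vec n" "v \<noteq> 0\<^sub>v n"
  obtains i where "i < n" "v $ i \<noteq> 0"
  using assms by (metis carrier_vecD eq_vecI index_zero_vec)

lemma eigenvector_monomial_mat_index:
  fixes c :: "nat \<Rightarrow> 'a::comm_ring_1"
  assumes "\<forall>i<n. \<pi> i < n" "eigenvector (monomial_mat n c \<pi>) v \<gamma>" "i < n"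
  shows "\<gamma> * v $ i = c i * v $ \<pi> i"
proof -
  have "(monomial_mat n c \<pi> *\<^sub>v v) $ i = (\<gamma> \<cdot>\<^sub>v v) $ i"
    using assms(2) by (simp add: eigenvector_def)
  then show ?thesis
    using assms monomial_mat_mult_vec_index[of \<pi> i n v c] by (auto simp: eigenvector_def)
qed

lemma eigenvector_monomial_mat_funpow_index:
  fixes c :: "nat \<Rightarrow> 'a::comm_ring_1"
  assumes "\<forall>i<n. \<pi> i < n" "eigenvector (monomial_mat n c \<pi>) v \<gamma>" "i < n"
  shows "\<gamma> ^ t * v $ i = (\<Prod>s<t. c ((\<pi> ^^ s) i)) * v $ (\<pi> ^^ t) i"
proof (induction t)
  case (Suc t)
  have "(\<pi> ^^ t) i < n"
    using assms(1,3) by (induction t) auto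
  then have step: "\<gamma> * v $ (\<pi> ^^ t) i = c ((\<pi> ^^ t) i) * v $ (\<pi> ^^ Suc t) i"
    using eigenvector_monomial_mat_index[OF assms(1,2)] by simp
  have "\<gamma> ^ Suc t * v $ i = (\<Prod>s<t. c ((\<pi> ^^ s) i)) * (\<gamma> * v $ (\<pi> ^^ t) i)"
    using Suc.IH by (metis mult.left_commute mult.assoc power_Suc)
  then show ?case
    unfolding step by (simp add: mult_ac)
qed simp

lemma eigenvector_monomial_mat_fixpoint_eq:
  fixes c :: "nat \<Rightarrow> 'a::idom"
  assumes "\<forall>i<n. \<pi> i < n" "eigenvector (monomial_mat n c \<pi>) v \<gamma>" "i < n" "v $ i \<noteq> 0" "\<pi> i = i"
  shows "\<gamma> = c i"
  using eigenvector_monomial_mat_index[OF assms(1-3)] assms(4,5) by simp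

lemma eigenvector_monomial_mat_orbit_power:
  fixes c :: "nat \<Rightarrow> 'a::idom"
  assumes "\<forall>i<n. \<pi> i < n" "eigenvector (monomial_mat n c \<pi>) v \<gamma>" "i < n" "v $ i \<noteq> 0"
    and "(\<pi> ^^ L) i = i" "(\<Prod>s<L. c ((\<pi> ^^ s) i)) = 1"
  shows "\<gamma> ^ L = 1"
  using eigenvector_monomial_mat_funpow_index[OF assms(1-3), of L] assms(4-6) by simp

lemma eigenvalue_monomial_mat_fixpoint:
  fixes c :: "nat \<Rightarrow> 'a::comm_ring_1"
  assumes "\<forall>i<n. \<pi> i < n" "inj_on \<pi> {..<n}" "i < n" "\<pi> i = i"
  shows "eigenvalue (monomial_mat n c \<pi>) (c i)"
  unfolding eigenvalue_def eigenvector_def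
proof (intro exI conjI)
  show "monomial_mat n c \<pi> *\<^sub>v unit_vec n i = c i \<cdot>\<^sub>v unit_vec n i"
  proof (rule eq_vecI)
    fix r assume "r < dim_vec (c i \<cdot>\<^sub>v unit_vec n i)"
    then have r: "r < n" by simp
    have "\<pi> r = i \<longleftrightarrow> r = i"
      using assms r by (metis inj_onD lessThan_iff)
    then show "(monomial_mat n c \<pi> *\<^sub>v unit_vec n i) $ r = (c i \<cdot>\<^sub>v unit_vec n i) $ r"
      using assms r monomial_mat_mult_vec_index[of \<pi> r n "unit_vec n i" c] by auto
  qed simp
qed (use assms(3) in \<open>auto simp: unit_vec_def vec_eq_iff\<close>)

lemma eigenvalue_monomial_mat_cycle:
  fixes c :: "nat \<Rightarrow> 'a::field"
  assumes maps: "\<forall>i<n. \<pi> i < n" and period: "\<forall>r<n. (\<pi> ^^ L) r = r"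
    and x: "x < n" and cycle: "\<And>t. 0 < t \<Longrightarrow> t < L \<Longrightarrow> (\<pi> ^^ t) x \<noteq> x"
    and orbit: "(\<Prod>s<L. c ((\<pi> ^^ s) x)) = 1" and root: "\<omega> ^ L = 1" and L: "0 < L"
  shows "eigenvalue (monomial_mat n c \<pi>) \<omega>"
proof -
  have "\<omega> \<noteq> 0"
    using root L by (metis power_0_left less_irrefl zero_neq_one)
  \<comment> \<open>\<open>v r = \<omega>^-t \<Prod>s<t. c (\<pi>^s r)\<close>, where \<open>t < L\<close> is the number of steps from \<open>r\<close> to \<open>x\<close>;
    summing over all \<open>t < L\<close> avoids having to invert \<open>\<pi>\<close>.\<close>
  define g where "g r t = (if (\<pi> ^^ t) r = x then inverse \<omega> ^ t * (\<Prod>s<t. c ((\<pi> ^^ s) r)) else 0)"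
    for r t
  define v where "v = vec n (\<lambda>r. \<Sum>t<L. g r t)"
  have periodic: "g r L = g r 0" if "r < n" for r
    using period that orbit root by (cases "r = x") (auto simp: g_def power_inverse)
  have shift: "c r * g (\<pi> r) t = \<omega> * g r (Suc t)" for r t
  proof -
    have "c r * (\<Prod>s<t. c ((\<pi> ^^ s) (\<pi> r))) = (\<Prod>s<Suc t. c ((\<pi> ^^ s) r))"
      by (simp only: prod.lessThan_Suc_shift) (simp add: funpow_Suc_right del: funpow.simps)
    then have "c r * g (\<pi> r) t =
        (if (\<pi> ^^ Suc t) r = x then inverse \<omega> ^ t * (\<Prod>s<Suc t. c ((\<pi> ^^ s) r)) else 0)"
      unfolding g_def by (simp add: funpow_Suc_right mult.left_commute del: funpow.simps)
    also have "\<dots> = \<omega> * g r (Suc t)"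
      using \<open>\<omega> \<noteq> 0\<close> by (simp add: g_def)
    finally show ?thesis .
  qed
  have "monomial_mat n c \<pi> *\<^sub>v v = \<omega> \<cdot>\<^sub>v v"
  proof (rule eq_vecI)
    fix r assume "r < dim_vec (\<omega> \<cdot>\<^sub>v v)"
    then have r: "r < n" by (simp add: v_def)
    have "(monomial_mat n c \<pi> *\<^sub>v v) $ r = c r * v $ \<pi> r"
      using maps r by (intro monomial_mat_mult_vec_index) (auto simp: v_def)
    also have "\<dots> = (\<Sum>t<L. c r * g (\<pi> r) t)"
      using maps r by (simp add: v_def sum_distrib_left)
    also have "\<dots> = \<omega> * (\<Sum>t<L. g r (Suc t))"
      by (simp add: shift sum_distrib_left)
    also have "(\<Sum>t<L. g r (Suc t)) = (\<Sum>t<L. g r t)"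
      using sum.lessThan_Suc_shift[of "g r" L] periodic[OF r] by simp
    finally show "(monomial_mat n c \<pi> *\<^sub>v v) $ r = (\<omega> \<cdot>\<^sub>v v) $ r"
      using r by (simp add: v_def)
  qed (simp add: v_def)
  moreover have "v $ x = 1"
  proof -
    have "(\<Sum>t<L. g x t) = (\<Sum>t<L. if t = 0 then 1 else 0)"
      using cycle by (intro sum.cong) (auto simp: g_def)
    then show ?thesis
      using x L by (simp add: v_def)
  qed
  then have "v \<noteq> 0\<^sub>v n"
    using x by auto
  ultimately show ?thesis
    unfolding eigenvalue_def eigenvector_def by (intro exI[of _ v]) (auto simp: v_def)
qed

lemma bij_betw_mod_affine:
  fixes K p r :: nat
  assumes "coprime K p"
  shows "bij_betw (\<lambda>s. (r + s * K) mod p) {..<p} {..<p}"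
proof (cases "p = 0")
  case False
  have "inj_on (\<lambda>s. (r + s * K) mod p) {..<p}"
  proof (rule inj_onI)
    fix x y assume "x \<in> {..<p}" "y \<in> {..<p}" "(r + x * K) mod p = (r + y * K) mod p"
    moreover from this have "[x = y] (mod p)"
      using assms by (simp add: cong_def[symmetric] cong_add_lcancel_nat cong_mult_rcancel_nat)
    ultimately show "x = y"
      by (simp add: cong_less_modulus_unique_nat)
  qed
  moreover have "(\<lambda>s. (r + s * K) mod p) ` {..<p} \<subseteq> {..<p}"
    using False by auto
  ultimately show ?thesis
    by (simp add: bij_betw_def endo_inj_surj)
qed (simp add: bij_betw_def)

lemma prod_mod_affine_reindex:
  fixes K p r :: nat
  assumes "coprime K p"
  shows "(\<Prod>s<p. f ((r + s * K) mod p)) = (\<Prod>j<p. f j)"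
  using prod.reindex_bij_betw[OF bij_betw_mod_affine[OF assms], of f] by simp

lemma prod_rotate: "(\<Prod>j<p. f ((j + k) mod p)) = (\<Prod>j<(p::nat). f j)"
  using prod_mod_affine_reindex[of 1 p f k] by (simp add: add.commute)

lemma coprime_less_prime:
  fixes k p :: nat
  assumes "prime p" "0 < k" "k < p"
  shows "coprime k p"
proof -
  have "\<not> p dvd k"
    using assms by (auto dest: dvd_imp_le)
  then show ?thesis
    using prime_imp_coprime[OF assms(1)] by (simp add: coprime_commute)
qed

definition unit_root :: "nat \<Rightarrow> complex" where
  "unit_root N = exp (2 * pi * \<i> / of_nat N)"

lemma unit_root_power: "unit_root N ^ m = exp (2 * pi * \<i> * of_nat m / of_nat N)"
  unfolding unit_root_def by (subst exp_of_nat_mult[symmetric]) (simp add: field_simps)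

lemma unit_root_nonzero [simp]: "unit_root N \<noteq> 0"
  by (simp add: unit_root_def)

lemma norm_unit_root_power [simp]: "cmod (unit_root N ^ m) = 1"
  unfolding unit_root_power by (simp add: norm_exp_eq_Re)

lemma unit_root_power_cong:
  assumes "[m = m'] (mod N)"
  shows "unit_root N ^ m = unit_root N ^ m'"
proof (cases "N = 0")
  case False
  have "unit_root N ^ (N * q) = 1" for q
    using False by (simp add: power_mult unit_root_power)
  then have "unit_root N ^ m = unit_root N ^ (m mod N)" for m
    by (metis div_mult_mod_eq mult.commute mult_1 power_add)
  then show ?thesis
    using assms by (metis cong_def)
qed (use assms in simp)

lemma unit_root_power_approx:
  assumes N: "2 \<le> N" and \<gamma>: "cmod \<gamma> = 1"
  shows "\<exists>m. \<bar>Arg (unit_root N ^ m / \<gamma>)\<bar> \<le> pi / N"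
proof -
  define \<theta> where "\<theta> = Arg \<gamma>"
  define n where "n = \<lfloor>\<theta> * N / (2 * pi) + 1 / 2\<rfloor>"
  define x where "x = 2 * pi * n / N - \<theta>"
  have N0: "real N > 0"
    using N by simp
  have "\<bar>n - \<theta> * N / (2 * pi)\<bar> \<le> 1 / 2"
    unfolding n_def by linarith
  then have "\<bar>n - \<theta> * N / (2 * pi)\<bar> * (2 * pi / N) \<le> 1 / 2 * (2 * pi / N)"
    using N0 by (intro mult_right_mono) auto
  also have "\<bar>n - \<theta> * N / (2 * pi)\<bar> * (2 * pi / N) = \<bar>x\<bar>"
    unfolding x_def using N0 by (simp add: abs_mult[symmetric] field_simps)
  finally have x_bound: "\<bar>x\<bar> \<le> pi / N"
    by simp
  moreover have "pi / N < pi"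
    using N by (simp add: divide_less_eq)
  ultimately have "-pi < x" "x \<le> pi"
    by linarith+
  define m where "m = nat (n mod N)"
  have "int m = n - N * (n div N)"
    using N by (simp add: m_def minus_mult_div_eq_mod)
  then have n_eq: "(of_int n :: complex) = of_nat m + of_nat N * of_int (n div N)"
    by (metis add_diff_cancel_right' diff_add_cancel of_int_add of_int_mult of_int_of_nat_eq)
  have "2 * pi * \<i> * of_nat m / of_nat N =
      2 * pi * \<i> * of_int n / of_nat N + \<i> * (of_int (- (n div N)) * (of_real pi * 2))"
    using N0 unfolding n_eq by (simp add: field_simps algebra_simps)
  then have "unit_root N ^ m = exp (2 * pi * \<i> * of_int n / of_nat N)"
    unfolding unit_root_power by (simp only: exp_plus_2pin)
  also have "2 * pi * \<i> * of_int n / of_nat N = \<i> * of_real x + \<i> * of_real \<theta>"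
    using N0 by (simp add: x_def field_simps)
  also have "exp \<dots> = exp (\<i> * of_real x) * \<gamma>"
    using \<gamma> by (simp add: exp_add \<theta>_def complex_norm_eq_1_exp_eq)
  finally have "unit_root N ^ m / \<gamma> = exp (\<i> * of_real x)"
    using \<gamma> by auto
  then have "Arg (unit_root N ^ m / \<gamma>) = x"
    using \<open>-pi < x\<close> \<open>x \<le> pi\<close> by (intro Arg_unique[of 1]) auto
  then show ?thesis
    using x_bound by blast
qed

lemma det_diag_of: "det (diag_of n d) = (\<Prod>i<n. d i)"
proof -
  have "det (diag_of n d) = prod_list (diag_mat (diag_of n d))"
    by (rule det_upper_triangular) (auto simp: upper_triangular_def diag_of_def)
  also have "\<dots> = prod_list (map d [0..<n])"
    by (auto simp: diag_mat_def diag_of_def intro!: arg_cong[where f = prod_list] map_cong)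
  finally show ?thesis
    by (metis distinct_upt prod.distinct_set_conv_list set_upt lessThan_atLeast0)
qed

lemma diag_of_eq_monomial_mat: "diag_of n d = monomial_mat n d id"
  by (rule eq_matI) (auto simp: diag_of_def)

lemma cycle_mat_pow_eq_monomial_mat:
  "cycle_mat p ^\<^sub>m k = monomial_mat p (\<lambda>_. 1) (\<lambda>i. (i + k) mod p)"
proof (induction k)
  case 0
  show ?case
    by (auto simp: one_mat_eq_monomial_mat cycle_mat_def intro!: monomial_mat_cong)
next
  case (Suc k)
  have C: "cycle_mat p = monomial_mat p (\<lambda>_. 1) (\<lambda>i. (i + 1) mod p)"
    by (rule eq_matI) (auto simp: cycle_mat_def)
  have "cycle_mat p ^\<^sub>m Suc k =
      monomial_mat p (\<lambda>_. 1) (\<lambda>i. (i + k) mod p) * monomial_mat p (\<lambda>_. 1) (\<lambda>i. (i + 1) mod p)"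
    by (subst pow_mat.simps(2), subst Suc.IH, subst C) (rule refl)
  then show ?case
    by (auto simp: monomial_mat_mult mod_Suc_eq intro!: monomial_mat_cong)
qed

definition T_perm :: "nat \<Rightarrow> nat \<Rightarrow> nat \<Rightarrow> nat" where
  "T_perm p k i = (if i < p then (i + k) mod p else i)"

definition T_entry :: "nat \<Rightarrow> nat \<Rightarrow> (nat \<Rightarrow> nat) \<Rightarrow> nat \<Rightarrow> complex" where
  "T_entry p k a j = (if j = 0 then 1 else unit_root (p\<^sup>2) ^ (j * k + a j * p))"

definition T_coeff :: "nat \<Rightarrow> (nat \<Rightarrow> complex) \<Rightarrow> nat \<Rightarrow> (nat \<Rightarrow> nat) \<Rightarrow> nat \<Rightarrow> complex" where
  "T_coeff p d k a i = (if i < p then d i else T_entry p k a (i - p))"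

lemma norm_T_entry [simp]: "cmod (T_entry p k a j) = 1"
  by (simp add: T_entry_def)

lemma T_elem_eq_monomial_mat:
  "T_elem p d k a = monomial_mat (2 * p) (T_coeff p d k a) (T_perm p k)"
proof -
  have "diag_of p d * cycle_mat p ^\<^sub>m k = monomial_mat p d (\<lambda>i. (i + k) mod p)"
    unfolding diag_of_eq_monomial_mat cycle_mat_pow_eq_monomial_mat by (simp add: monomial_mat_mult)
  then have "T_elem p d k a =
      four_block_mat (monomial_mat p d (\<lambda>i. (i + k) mod p)) (0\<^sub>m p p) (0\<^sub>m p p) (diag_of p (T_entry p k a))"
    unfolding T_elem_def Let_def T_entry_def[abs_def] unit_root_def by simp
  then show ?thesis
    by (intro eq_matI) (auto simp: T_coeff_def T_perm_def diag_of_def)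
qed

lemma T_perm_less: "i < 2 * p \<Longrightarrow> T_perm p k i < 2 * p"
  by (cases "p = 0") (auto simp: T_perm_def intro: less_trans[OF mod_less_divisor])

lemma inj_on_T_perm: "inj_on (T_perm p k) {..<2 * p}"
proof (rule inj_onI)
  fix x y assume "x \<in> {..<2 * p}" "y \<in> {..<2 * p}" and eq: "T_perm p k x = T_perm p k y"
  show "x = y"
  proof (cases "x < p \<and> y < p")
    case True
    have "inj_on (\<lambda>i. (i + k) mod p) {..<p}"
      using bij_betw_mod_affine[of 1 p k] by (simp add: bij_betw_def add.commute)
    moreover have "(x + k) mod p = (y + k) mod p"
      using True eq by (simp add: T_perm_def)
    ultimately show ?thesis
      using True by (meson inj_onD lessThan_iff)
  next
    case False
    have "T_perm p k i < p \<longleftrightarrow> i < p" for i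
      by (cases "i < p") (auto simp: T_perm_def)
    then have "\<not> x < p" "\<not> y < p"
      using False eq by metis+
    then show ?thesis
      using eq by (simp add: T_perm_def)
  qed
qed

lemma T_perm_funpow: "i < p \<Longrightarrow> (T_perm p k ^^ s) i = (i + s * k) mod p"
  by (induction s) (simp_all add: T_perm_def mod_add_left_eq mod_add_right_eq algebra_simps)

lemma T_perm_funpow_fixed: "p \<le> i \<Longrightarrow> (T_perm p k ^^ s) i = i"
  by (induction s) (simp_all add: T_perm_def)

lemma T_perm_funpow_period: "(T_perm p k ^^ p) i = i"
  by (cases "i < p") (simp_all add: T_perm_funpow T_perm_funpow_fixed)

lemma T_entry_mult:
  assumes "p > 0"
  shows "T_entry p k a j * T_entry p k' a' j =
    T_entry p ((k + k') mod p) (\<lambda>j. (a j + a' j + j * ((k + k') div p)) mod p) j"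
proof (cases "j = 0")
  case False
  define X where "X = a j + a' j + j * ((k + k') div p)"
  have "j * k + j * k' = j * ((k + k') mod p) + j * (p * ((k + k') div p))"
    by (metis distrib_left mod_mult_div_eq)
  then have "j * k + a j * p + (j * k' + a' j * p) = j * ((k + k') mod p) + p * X"
    unfolding X_def by (simp add: algebra_simps)
  moreover have "[p * X = X mod p * p] (mod p\<^sup>2)"
    by (simp add: cong_def power2_eq_square mod_mult_mult1 mult.commute)
  ultimately have "[j * k + a j * p + (j * k' + a' j * p) = j * ((k + k') mod p) + X mod p * p] (mod p\<^sup>2)"
    by (simp add: cong_add_lcancel_nat)
  then show ?thesis
    using False by (simp add: T_entry_def X_def power_add[symmetric] unit_root_power_cong)
qed (simp add: T_entry_def)

lemma T_elem_mult:
  assumes "p > 0"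
  shows "T_elem p d k a * T_elem p d' k' a' =
    T_elem p (\<lambda>i. d i * d' ((i + k) mod p)) ((k + k') mod p) (\<lambda>j. (a j + a' j + j * ((k + k') div p)) mod p)"
  unfolding T_elem_eq_monomial_mat
proof (subst monomial_mat_mult, simp add: T_perm_less, rule monomial_mat_cong)
  fix i assume "i < 2 * p"
  then show "T_coeff p d k a i * T_coeff p d' k' a' (T_perm p k i) =
    T_coeff p (\<lambda>i. d i * d' ((i + k) mod p)) ((k + k') mod p)
      (\<lambda>j. (a j + a' j + j * ((k + k') div p)) mod p) i"
    using assms T_entry_mult[OF assms] by (simp add: T_coeff_def T_perm_def)
next
  fix i
  show "T_perm p k' (T_perm p k i) = T_perm p ((k + k') mod p) i"
    by (simp add: T_perm_def mod_add_left_eq mod_add_right_eq add.assoc)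
qed

lemma T_setE:
  assumes "A \<in> T_set p"
  obtains d k a where "A = T_elem p d k a" "\<forall>i<p. cmod (d i) = 1" "(\<Prod>i<p. d i) = 1" "k < p"
    "\<forall>j\<in>{1..p-1}. a j < p"
  using assms unfolding T_set_def det_diag_of by blast

lemma T_setI:
  assumes "\<forall>i<p. cmod (d i) = 1" "(\<Prod>i<p. d i) = 1" "k < p" "\<forall>j\<in>{1..p-1}. a j < p"
  shows "T_elem p d k a \<in> T_set p"
  using assms unfolding T_set_def det_diag_of by blast

lemma prod_mult_rotate:
  "(\<Prod>i<p. d i * d' ((i + k) mod p)) = (\<Prod>i<p. d i) * (\<Prod>i<(p::nat). d' i)"
  by (simp add: prod.distrib prod_rotate)

lemma T_elem_eq_one_mat:
  assumes "\<forall>i<p. d i = 1" "\<forall>j. a j = 0"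
  shows "T_elem p d 0 a = 1\<^sub>m (2 * p)"
  unfolding T_elem_eq_monomial_mat one_mat_eq_monomial_mat
  using assms by (intro monomial_mat_cong) (simp_all add: T_coeff_def T_entry_def T_perm_def)

lemma one_mat_in_T_set:
  assumes "p > 0"
  shows "1\<^sub>m (2 * p) \<in> T_set p"
  using T_setI[of p "\<lambda>_. 1" 0 "\<lambda>_. 0"] T_elem_eq_one_mat[of p "\<lambda>_. 1" "\<lambda>_. 0"] assms by simp

lemma T_set_mult_closed:
  assumes "prime p" "A \<in> T_set p" "B \<in> T_set p"
  shows "A * B \<in> T_set p"
proof -
  have p: "p > 0"
    using assms(1) by (simp add: prime_gt_0_nat)
  obtain d k a where A: "A = T_elem p d k a" "\<forall>i<p. cmod (d i) = 1" "(\<Prod>i<p. d i) = 1"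
    using assms(2) by (elim T_setE)
  obtain d' k' a' where B: "B = T_elem p d' k' a'" "\<forall>i<p. cmod (d' i) = 1" "(\<Prod>i<p. d' i) = 1"
    using assms(3) by (elim T_setE)
  show ?thesis
    unfolding A(1) B(1) T_elem_mult[OF p]
    using A B p by (intro T_setI) (auto simp: prod_mult_rotate norm_mult)
qed

lemma mod_add_complement:
  fixes x p :: nat
  assumes "p > 0"
  shows "(x + (p - x mod p) mod p) mod p = 0"
proof -
  have "(x + (p - x mod p) mod p) mod p = (x mod p + (p - x mod p)) mod p"
    by (simp add: mod_add_right_eq mod_add_left_eq)
  also have "x mod p + (p - x mod p) = p"
    using assms by (simp add: less_imp_le)
  finally show ?thesis
    by simp
qed

lemma T_set_inverse:
  assumes "prime p" "A \<in> T_set p"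
  shows "\<exists>B\<in>T_set p. A * B = 1\<^sub>m (2 * p) \<and> B * A = 1\<^sub>m (2 * p)"
proof -
  have p: "p > 0"
    using assms(1) by (simp add: prime_gt_0_nat)
  obtain d k a where A: "A = T_elem p d k a" "\<forall>i<p. cmod (d i) = 1" "(\<Prod>i<p. d i) = 1" "k < p"
    using assms(2) by (elim T_setE)
  define k' where "k' = (p - k) mod p"
  define q where "q = (k + k') div p"
  define d' where "d' j = inverse (d ((j + k') mod p))" for j
  define a' where "a' j = (p - (a j + j * q) mod p) mod p" for j
  have kk': "(k + k') mod p = 0"
    using A(4) by (cases "k = 0") (auto simp: k'_def mod_add_right_eq)
  have "(\<Prod>i<p. d' i) = inverse (\<Prod>i<p. d ((i + k') mod p))"
    using prod_inversef[of "\<lambda>i. d ((i + k') mod p)" "{..<p}"] by (simp add: d'_def comp_def)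
  then have "(\<Prod>i<p. d' i) = 1"
    using A(3) by (simp add: prod_rotate)
  then have B: "T_elem p d' k' a' \<in> T_set p"
    using A(2) p by (intro T_setI) (auto simp: d'_def a'_def k'_def norm_inverse)
  have "d i * d' ((i + k) mod p) = 1" if "i < p" for i
  proof -
    have "((i + k) mod p + k') mod p = i"
      using that kk' by (metis add.assoc mod_add_left_eq mod_add_right_eq add_0_right mod_less)
    moreover have "d i \<noteq> 0"
      using that A(2) by force
    ultimately show ?thesis
      by (simp add: d'_def)
  qed
  moreover have "(a j + a' j + j * q) mod p = 0" for j
    using mod_add_complement[OF p, of "a j + j * q"] unfolding a'_def by (simp add: add_ac)
  ultimately have AB: "A * T_elem p d' k' a' = 1\<^sub>m (2 * p)"
    unfolding A(1) T_elem_mult[OF p] kk' q_def[symmetric] by (intro T_elem_eq_one_mat) auto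
  have "A \<in> carrier_mat (2 * p) (2 * p)" "T_elem p d' k' a' \<in> carrier_mat (2 * p) (2 * p)"
    by (simp_all add: A(1) T_elem_eq_monomial_mat)
  then have "T_elem p d' k' a' * A = 1\<^sub>m (2 * p)"
    using AB by (rule mat_mult_left_right_inverse)
  then show ?thesis
    using AB B by blast
qed

lemma T_set_unitary:
  assumes "A \<in> T_set p"
  shows "unitary_mat (2 * p) A"
proof -
  obtain d k a where "A = T_elem p d k a" "\<forall>i<p. cmod (d i) = 1"
    using assms by (elim T_setE)
  then show ?thesis
    unfolding T_elem_eq_monomial_mat
    by (auto intro!: unitary_monomial_mat simp: T_perm_less inj_on_T_perm T_coeff_def)
qed

lemma T_coeff_orbit_prod:
  assumes "prime p" "0 < k" "k < p" "r < p"
  shows "(\<Prod>s<p. T_coeff p d k a ((T_perm p k ^^ s) r)) = (\<Prod>i<p. d i)"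
proof -
  have "(\<Prod>s<p. T_coeff p d k a ((T_perm p k ^^ s) r)) = (\<Prod>s<p. d ((r + s * k) mod p))"
    using assms(4) by (intro prod.cong) (simp_all add: T_perm_funpow T_coeff_def)
  also have "\<dots> = (\<Prod>i<p. d i)"
    using coprime_less_prime[OF assms(1-3)] by (rule prod_mod_affine_reindex)
  finally show ?thesis .
qed

lemma spectrum_T_elem_subset:
  assumes p: "prime p" and k: "k < p" and d: "(\<Prod>i<p. d i) = 1"
  shows "spectrum_mat (T_elem p d k a) \<subseteq>
    T_entry p k a ` {..<p} \<union> (if k = 0 then d ` {..<p} else {\<omega>. \<omega> ^ p = 1})"
proof
  let ?M = "monomial_mat (2 * p) (T_coeff p d k a) (T_perm p k)"
  have maps: "\<forall>i<2 * p. T_perm p k i < 2 * p"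
    by (simp add: T_perm_less)
  fix \<gamma> assume "\<gamma> \<in> spectrum_mat (T_elem p d k a)"
  then obtain v where v: "eigenvector ?M v \<gamma>"
    by (auto simp: spectrum_mat_def T_elem_eq_monomial_mat eigenvalue_def)
  then obtain i where i: "i < 2 * p" "v $ i \<noteq> 0"
    by (auto simp: eigenvector_def elim: nonzero_vec_index)
  consider "p \<le> i" | "i < p" "k = 0" | "i < p" "0 < k"
    by linarith
  then show "\<gamma> \<in> T_entry p k a ` {..<p} \<union> (if k = 0 then d ` {..<p} else {\<omega>. \<omega> ^ p = 1})"
  proof cases
    case 1
    then have "\<gamma> = T_entry p k a (i - p)"
      using eigenvector_monomial_mat_fixpoint_eq[OF maps v i] by (simp add: T_perm_def T_coeff_def)
    then show ?thesis
      using i(1) by auto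
  next
    case 2
    then have "\<gamma> = d i"
      using eigenvector_monomial_mat_fixpoint_eq[OF maps v i] by (simp add: T_perm_def T_coeff_def)
    then show ?thesis
      using 2 by auto
  next
    case 3
    then have "\<gamma> ^ p = 1"
      using eigenvector_monomial_mat_orbit_power[OF maps v i T_perm_funpow_period]
        T_coeff_orbit_prod[OF p _ k] d by simp
    then show ?thesis
      using 3 by simp
  qed
qed

lemma spectrum_T_elem_supset:
  assumes p: "prime p" and k: "k < p" and d: "(\<Prod>i<p. d i) = 1"
  shows "T_entry p k a ` {..<p} \<union> (if k = 0 then d ` {..<p} else {\<omega>. \<omega> ^ p = 1}) \<subseteq>
    spectrum_mat (T_elem p d k a)"
proof
  let ?c = "T_coeff p d k a" and ?\<pi> = "T_perm p k"
  have maps: "\<forall>i<2 * p. ?\<pi> i < 2 * p"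
    by (simp add: T_perm_less)
  note fixpoint = eigenvalue_monomial_mat_fixpoint[OF maps inj_on_T_perm]
  fix \<gamma> assume "\<gamma> \<in> T_entry p k a ` {..<p} \<union> (if k = 0 then d ` {..<p} else {\<omega>. \<omega> ^ p = 1})"
  then consider j where "j < p" "\<gamma> = ?c (p + j)" | i where "k = 0" "i < p" "\<gamma> = ?c i"
    | "0 < k" "\<gamma> ^ p = 1"
    by (auto simp: T_coeff_def split: if_splits)
  then have "eigenvalue (monomial_mat (2 * p) ?c ?\<pi>) \<gamma>"
  proof cases
    case 1
    then show ?thesis
      using fixpoint[of "p + j"] by (simp add: T_perm_def)
  next
    case 2
    then show ?thesis
      using fixpoint[of i] by (simp add: T_perm_def)
  next
    case 3
    have p0: "0 < p"
      using k by simp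
    have "(?\<pi> ^^ t) 0 \<noteq> 0" if "0 < t" "t < p" for t
    proof
      assume "(?\<pi> ^^ t) 0 = 0"
      then have "p dvd t * k"
        using p0 by (simp add: T_perm_funpow mod_eq_0_iff_dvd)
      then show False
        using p that 3 k by (auto simp: prime_dvd_mult_iff dest: dvd_imp_le)
    qed
    moreover have "(\<Prod>s<p. ?c ((?\<pi> ^^ s) 0)) = 1"
      using T_coeff_orbit_prod[OF p 3(1) k p0] d by simp
    ultimately show ?thesis
      using p0 3(2) by (intro eigenvalue_monomial_mat_cycle[OF maps, where x = 0 and L = p])
        (simp_all add: T_perm_funpow_period)
  qed
  then show "\<gamma> \<in> spectrum_mat (T_elem p d k a)"
    by (simp add: spectrum_mat_def T_elem_eq_monomial_mat)
qed

lemma spectrum_T_elem: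
  assumes "prime p" "k < p" "(\<Prod>i<p. d i) = 1"
  shows "spectrum_mat (T_elem p d k a) =
    T_entry p k a ` {..<p} \<union> (if k = 0 then d ` {..<p} else {\<omega>. \<omega> ^ p = 1})"
  using spectrum_T_elem_subset[OF assms] spectrum_T_elem_supset[OF assms] by (rule antisym)

lemma T_entry_power_p: "T_entry p k a j ^ p = unit_root (p\<^sup>2) ^ (j * k * p)"
proof (cases "j = 0")
  case False
  have "(j * k + a j * p) * p = j * k * p + a j * p\<^sup>2"
    by (simp add: algebra_simps power2_eq_square)
  then have "[(j * k + a j * p) * p = j * k * p] (mod p\<^sup>2)"
    by (simp add: cong_def)
  then show ?thesis
    using False by (simp add: T_entry_def power_mult[symmetric] unit_root_power_cong)
qed (simp add: T_entry_def)

lemma unit_root_power_in_spectrum_mult: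
  assumes p: "prime p" and k: "0 < k" "k < p" and k': "0 < k'" "k' < p"
    and d: "(\<Prod>i<p. d i) = 1" and d': "(\<Prod>i<p. d' i) = 1"
  shows "\<exists>\<alpha>\<in>spectrum_mat (T_elem p d k a). \<exists>\<beta>\<in>spectrum_mat (T_elem p d' k' a').
    \<alpha> * \<beta> = unit_root (p\<^sup>2) ^ m"
proof -
  \<comment> \<open>Choose \<open>j k \<equiv> m (mod p)\<close>; then \<open>\<xi>^m / T_entry p k a j\<close> is a \<open>p\<close>-th root of unity.\<close>
  have "m mod p \<in> (\<lambda>s. (0 + s * k) mod p) ` {..<p}"
    using bij_betw_mod_affine[OF coprime_less_prime[OF p k], of 0] k by (simp add: bij_betw_def)
  then obtain j where j: "j < p" "(j * k) mod p = m mod p"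
    by auto
  define \<alpha> where "\<alpha> = T_entry p k a j"
  define \<beta> where "\<beta> = unit_root (p\<^sup>2) ^ m / \<alpha>"
  have "\<alpha> \<noteq> 0"
    unfolding \<alpha>_def by (metis norm_T_entry norm_zero zero_neq_one)
  have "[m * p = j * k * p] (mod p\<^sup>2)"
    using j(2) by (simp add: cong_def power2_eq_square mod_mult_mult2)
  then have "\<beta> ^ p = 1"
    using \<open>\<alpha> \<noteq> 0\<close> by (simp add: \<beta>_def \<alpha>_def power_divide T_entry_power_p
      power_mult[symmetric] unit_root_power_cong)
  then have "\<beta> \<in> spectrum_mat (T_elem p d' k' a')"
    using spectrum_T_elem[OF p k'(2) d'] k' by simp
  moreover have "\<alpha> \<in> spectrum_mat (T_elem p d k a)"
    using spectrum_T_elem[OF p k(2) d] j(1) by (simp add: \<alpha>_def)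
  moreover have "\<alpha> * \<beta> = unit_root (p\<^sup>2) ^ m"
    using \<open>\<alpha> \<noteq> 0\<close> by (simp add: \<beta>_def)
  ultimately show ?thesis
    by blast
qed

lemma one_mem_spectrum_T_elem:
  assumes "prime p" "k < p" "(\<Prod>i<p. d i) = 1"
  shows "1 \<in> spectrum_mat (T_elem p d k a)"
  using spectrum_T_elem_supset[OF assms, of a] assms(2) by (force simp: T_entry_def)

lemma spectrum_T_elem_mult_subset:
  assumes p: "prime p" and d: "(\<Prod>i<p. d i) = 1" and d': "(\<Prod>i<p. d' i) = 1"
  shows "spectrum_mat (T_elem p d k a * T_elem p d' k' a') \<subseteq>
    (\<lambda>j. T_entry p k a j * T_entry p k' a' j) ` {..<p} \<union>
    (if (k + k') mod p = 0 then (\<lambda>i. d i * d' ((i + k) mod p)) ` {..<p} else {\<omega>. \<omega> ^ p = 1})"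
proof -
  have p0: "0 < p"
    using p by (simp add: prime_gt_0_nat)
  have "(\<Prod>i<p. d i * d' ((i + k) mod p)) = 1"
    using d d' by (simp add: prod_mult_rotate)
  then have "spectrum_mat (T_elem p d k a * T_elem p d' k' a') \<subseteq>
      T_entry p ((k + k') mod p) (\<lambda>j. (a j + a' j + j * ((k + k') div p)) mod p) ` {..<p} \<union>
      (if (k + k') mod p = 0 then (\<lambda>i. d i * d' ((i + k) mod p)) ` {..<p} else {\<omega>. \<omega> ^ p = 1})"
    unfolding T_elem_mult[OF p0] using p0 by (intro spectrum_T_elem_subset[OF p]) simp_all
  moreover have "T_entry p ((k + k') mod p) (\<lambda>j. (a j + a' j + j * ((k + k') div p)) mod p) =
      (\<lambda>j. T_entry p k a j * T_entry p k' a' j)"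
    by (simp add: T_entry_mult[OF p0])
  ultimately show ?thesis
    by (simp only:)
qed

lemma spectrum_T_elem_mult_cases:
  assumes p: "prime p" and k: "k < p" "k' < p"
    and d: "\<forall>i<p. cmod (d i) = 1" "(\<Prod>i<p. d i) = 1"
    and d': "\<forall>i<p. cmod (d' i) = 1" "(\<Prod>i<p. d' i) = 1"
    and \<gamma>: "\<gamma> \<in> spectrum_mat (T_elem p d k a * T_elem p d' k' a')"
  shows "(\<exists>\<alpha>\<in>spectrum_mat (T_elem p d k a). \<exists>\<beta>\<in>spectrum_mat (T_elem p d' k' a'). \<alpha> * \<beta> = \<gamma>) \<or>
    (0 < k \<and> 0 < k' \<and> cmod \<gamma> = 1)"
proof -
  note spec_A = spectrum_T_elem[OF p k(1) d(2), of a]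
  note spec_B = spectrum_T_elem[OF p k(2) d'(2), of a']
  note one = one_mem_spectrum_T_elem[OF p k(1) d(2)] one_mem_spectrum_T_elem[OF p k(2) d'(2)]
  consider j where "j < p" "\<gamma> = T_entry p k a j * T_entry p k' a' j"
    | i where "(k + k') mod p = 0" "i < p" "\<gamma> = d i * d' ((i + k) mod p)"
    | "(k + k') mod p \<noteq> 0" "\<gamma> ^ p = 1"
  proof -
    have "\<gamma> \<in> (\<lambda>j. T_entry p k a j * T_entry p k' a' j) ` {..<p} \<union>
        (if (k + k') mod p = 0 then (\<lambda>i. d i * d' ((i + k) mod p)) ` {..<p} else {\<omega>. \<omega> ^ p = 1})"
      using spectrum_T_elem_mult_subset[OF p d(2) d'(2)] \<gamma> by blast
    then show thesis
      using that by (auto split: if_splits)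
  qed
  then show ?thesis
  proof cases
    case 1
    then show ?thesis
      using spec_A spec_B by auto
  next
    case 2
    consider "k = 0" "k' = 0" | "0 < k" "0 < k'"
      using 2(1) k by (metis add_0 add_0_right mod_less gr0I)
    then show ?thesis
    proof cases
      case 1
      then show ?thesis
        using 2 spec_A spec_B by auto
    next
      case 2
      then show ?thesis
        using \<open>i < p\<close> \<open>\<gamma> = d i * d' ((i + k) mod p)\<close> d(1) d'(1) by (simp add: norm_mult)
    qed
  next
    case 3
    then have "k \<noteq> 0 \<or> k' \<noteq> 0"
      by (metis add_0 mod_0)
    then have "\<gamma> * 1 = \<gamma> \<and> \<gamma> \<in> spectrum_mat (T_elem p d k a) \<or>
        1 * \<gamma> = \<gamma> \<and> \<gamma> \<in> spectrum_mat (T_elem p d' k' a')"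
      using 3 spec_A spec_B by auto
    then show ?thesis
      using one by blast
  qed
qed

lemma spectrum_T_elem_Arg_approx:
  assumes p: "prime p" and k: "0 < k" "k < p" and k': "0 < k'" "k' < p"
    and d: "(\<Prod>i<p. d i) = 1" and d': "(\<Prod>i<p. d' i) = 1" and \<gamma>: "cmod \<gamma> = 1"
  shows "\<exists>\<alpha>\<in>spectrum_mat (T_elem p d k a). \<exists>\<beta>\<in>spectrum_mat (T_elem p d' k' a').
    \<bar>Arg (\<alpha> * \<beta> / \<gamma>)\<bar> \<le> pi / p\<^sup>2"
proof -
  have "2 \<le> p\<^sup>2"
    using prime_ge_2_nat[OF p] by (simp add: power2_eq_square) (metis le_square order.trans)
  then obtain m where m: "\<bar>Arg (unit_root (p\<^sup>2) ^ m / \<gamma>)\<bar> \<le> pi / p\<^sup>2"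
    using unit_root_power_approx[OF _ \<gamma>] by fastforce
  moreover obtain \<alpha> \<beta> where "\<alpha> \<in> spectrum_mat (T_elem p d k a)" "\<beta> \<in> spectrum_mat (T_elem p d' k' a')"
    "\<alpha> * \<beta> = unit_root (p\<^sup>2) ^ m"
    using unit_root_power_in_spectrum_mult[OF p k k' d d'] by blast
  ultimately show ?thesis
    by metis
qed

lemma T_set_argument_bound:
  assumes p: "prime p" and A: "A \<in> T_set p" and B: "B \<in> T_set p" and \<gamma>: "\<gamma> \<in> spectrum_mat (A * B)"
  shows "\<exists>\<alpha>\<in>spectrum_mat A. \<exists>\<beta>\<in>spectrum_mat B. \<bar>Arg (\<alpha> * \<beta> / \<gamma>)\<bar> \<le> pi / p\<^sup>2"
proof -
  obtain d k a where A': "A = T_elem p d k a" "\<forall>i<p. cmod (d i) = 1" "(\<Prod>i<p. d i) = 1" "k < p"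
    using A by (elim T_setE)
  obtain d' k' a' where B': "B = T_elem p d' k' a'" "\<forall>i<p. cmod (d' i) = 1" "(\<Prod>i<p. d' i) = 1" "k' < p"
    using B by (elim T_setE)
  from spectrum_T_elem_mult_cases[OF p A'(4) B'(4) A'(2,3) B'(2,3)] \<gamma>
  consider "\<exists>\<alpha>\<in>spectrum_mat A. \<exists>\<beta>\<in>spectrum_mat B. \<alpha> * \<beta> = \<gamma>" | "0 < k" "0 < k'" "cmod \<gamma> = 1"
    unfolding A'(1) B'(1) by blast
  then show ?thesis
  proof cases
    case 1
    then obtain \<alpha> \<beta> where "\<alpha> \<in> spectrum_mat A" "\<beta> \<in> spectrum_mat B" "\<alpha> * \<beta> = \<gamma>"
      by blast
    then show ?thesis
      by (intro bexI[of _ \<alpha>] bexI[of _ \<beta>]) (auto simp: Arg_zero)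
  next
    case 2
    then show ?thesis
      using spectrum_T_elem_Arg_approx[OF p _ A'(4) _ B'(4) A'(3) B'(3)] A'(1) B'(1) by blast
  qed
qed

theorem theorem5:
  fixes p :: nat
  assumes "prime p" and "odd p"
  shows "is_mat_group (2 * p) (T_set p) \<and> (\<forall>A\<in>T_set p. unitary_mat (2 * p) A)
         \<and> eps_ASM (1 / (2 * real p ^ 2)) (T_set p)"
proof (intro conjI)
  show unitary: "\<forall>A\<in>T_set p. unitary_mat (2 * p) A"
    using T_set_unitary by blast
  show "is_mat_group (2 * p) (T_set p)"
    unfolding is_mat_group_def
    using unitary assms(1) prime_gt_0_nat
    by (auto simp: unitary_mat_def intro: one_mat_in_T_set T_set_mult_closed T_set_inverse)
  show "eps_ASM (1 / (2 * real p ^ 2)) (T_set p)"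
    unfolding eps_ASM_def
  proof (intro ballI)
    fix A B \<gamma> assume "A \<in> T_set p" "B \<in> T_set p" "\<gamma> \<in> spectrum_mat (A * B)"
    then obtain \<alpha> \<beta> where "\<alpha> \<in> spectrum_mat A" "\<beta> \<in> spectrum_mat B" "\<bar>Arg (\<alpha> * \<beta> / \<gamma>)\<bar> \<le> pi / p\<^sup>2"
      using T_set_argument_bound[OF assms(1)] by blast
    moreover have "pi / p\<^sup>2 / (2 * pi) = 1 / (2 * real p ^ 2)"
      by simp
    ultimately show "\<exists>\<alpha>\<in>spectrum_mat A. \<exists>\<beta>\<in>spectrum_mat B. \<bar>Arg (\<alpha> * \<beta> / \<gamma>)\<bar> / (2 * pi) \<le> 1 / (2 * real p ^ 2)"
      by (metis divide_right_mono pi_gt_zero less_eq_real_def mult_pos_pos zero_less_numeral)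
  qed
qed

end
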